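(* Let $Q_1,Q_2\in\mathscr{Q}$ and $\delta>0$ with $\delta\le\min\{Q_1(1),Q_2(1)\}\le\max\{Q_1(1),Q_2(1)\}\le\sqrt{1-\delta^2}$. Let $W_1,W_2$ be the vorticity profiles associated with $Q_1,Q_2$. Then there is $C>0$ depending only on $\delta$ such that $\sup_{r>0}(1+r^4)|W_1(r)-W_2(r)|\le C\|Q_1-Q_2\|_{L^\infty(\mathbb{R}_+)}$ and $\sup_{r>0}(1+r^5)|W_1'(r)-W_2'(r)|\le C\,\mathcal{N}(Q_1-Q_2)+C\bigl(1+\mathcal{N}(Q_2)\bigr)\|Q_1-Q_2\|_{L^\infty(\mathbb{R}_+)}$.
   Context: Class $\mathscr{Q}$: all $\mathcal{C}^1$ functions $Q:(0,\infty)\to(0,1]$ with $Q'>0$ on $(0,\infty)$, $Q(r)\to0$ and $rQ'(r)\to0$ as $r\to0$, and $rQ'(r)\to0$ as $r\to\infty$. For a $\mathcal{C}^1$ function $F$ on $(0,\infty)$, $\mathcal{N}(F)=\sup_{r>0}r|F'(r)|$. The vorticity profile associated with $Q\in\mathscr{Q}$: $J=Q^{-2}-1$, $\Omega(r)=\exp\bigl(-\int_0^r\frac{4}{s+\sqrt{s^2+4J(s)}}ds\bigr)$, $W(r)=\Omega(r)\bigl(2-\frac{4r}{r+\sqrt{r^2+4J(r)}}\bigr)$. *)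

theory Defs
  imports "HOL-Analysis.Analysis"
begin

text \<open>The class Q: C^1 functions (0,inf) -> (0,1] with Q' > 0, Q -> 0 and r Q'(r) -> 0 as r -> 0,
  and r Q'(r) -> 0 as r -> inf.  Functions are total on real; only values on (0,inf) matter.\<close>
definition classQ :: "(real \<Rightarrow> real) set" where
  "classQ = {Q. (\<forall>r>0. Q differentiable (at r)) \<and>
               continuous_on {0<..} (deriv Q) \<and>
               (\<forall>r>0. 0 < Q r \<and> Q r \<le> 1) \<and>
               (\<forall>r>0. deriv Q r > 0) \<and>
               (Q \<longlongrightarrow> 0) (at_right 0) \<and>
               ((\<lambda>r. r * deriv Q r) \<longlongrightarrow> 0) (at_right 0) \<and>
               ((\<lambda>r. r * deriv Q r) \<longlongrightarrow> 0) at_top}"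

definition JQ :: "(real \<Rightarrow> real) \<Rightarrow> real \<Rightarrow> real" where
  "JQ Q r = 1 / (Q r)\<^sup>2 - 1"

definition OmegaQ :: "(real \<Rightarrow> real) \<Rightarrow> real \<Rightarrow> real" where
  "OmegaQ Q r = exp (- integral {0..r} (\<lambda>s. 4 / (s + sqrt (s\<^sup>2 + 4 * JQ Q s))))"

definition WQ :: "(real \<Rightarrow> real) \<Rightarrow> real \<Rightarrow> real" where
  "WQ Q r = OmegaQ Q r * (2 - 4 * r / (r + sqrt (r\<^sup>2 + 4 * JQ Q r)))"

definition NN :: "(real \<Rightarrow> real) \<Rightarrow> real" where
  "NN F = (SUP r\<in>{0<..}. r * \<bar>deriv F r\<bar>)"

definition Linf :: "(real \<Rightarrow> real) \<Rightarrow> real" where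
  "Linf F = (SUP r\<in>{0<..}. \<bar>F r\<bar>)"

end

theory Submission
  imports Defs
begin

text \<open>Write \<open>q = Q s\<close> and \<open>R = sqrt (s\<^sup>2 q\<^sup>2 + 4 - 4 q\<^sup>2)\<close>, so that \<open>sqrt (s\<^sup>2 + 4 J s) = R / q\<close>,
  \<open>\<Omega> = exp (- \<integral> 4 q / (s q + R))\<close> and \<open>W = \<Omega> \<cdot> 8 (1 - q\<^sup>2) / (s q + R)\<^sup>2\<close>.
  Monotonicity of \<open>Q\<close> and the normalisation \<open>\<delta> \<le> Q 1 \<le> sqrt (1 - \<delta>\<^sup>2)\<close> give
  \<open>R \<ge> \<delta> (1 + s) / 2\<close>, and for \<open>s \<ge> 1\<close> the integrand of \<open>\<Omega>\<close> dominates the derivative of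
  \<open>ln (s\<^sup>2 + 1 / \<delta>\<^sup>2)\<close>, so \<open>\<Omega>(r) \<le> E(r)\<^sup>2\<close> with \<open>E(s) = 2 / (\<delta> (1 + s))\<close>. Hence every
  building block of \<open>W\<close> and \<open>W'\<close> is bounded by a power of \<open>E\<close> and depends on \<open>Q\<close> in a Lipschitz
  way, with a constant of the same order. Multiplying out, \<open>W\<^sub>1 - W\<^sub>2\<close> is of order \<open>E\<^sup>4\<close> and
  \<open>W\<^sub>1' - W\<^sub>2'\<close> of order \<open>E\<^sup>5\<close>, and \<open>(1 + r) E(r) = 2 / \<delta>\<close> absorbs the weights.\<close>

lemma abs_mult_diff_le:
  fixes a1 a2 b1 b2 :: real
  shows "\<bar>a1 * b1 - a2 * b2\<bar> \<le> \<bar>a1 - a2\<bar> * \<bar>b1\<bar> + \<bar>a2\<bar> * \<bar>b1 - b2\<bar>"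
proof -
  have "a1 * b1 - a2 * b2 = (a1 - a2) * b1 + a2 * (b1 - b2)" by (simp add: algebra_simps)
  then show ?thesis by (metis abs_mult abs_triangle_ineq)
qed

lemma abs_exp_neg_diff_le:
  fixes a b :: real
  shows "\<bar>exp (- a) - exp (- b)\<bar> \<le> max (exp (- a)) (exp (- b)) * \<bar>a - b\<bar>"
proof -
  have one_side: "exp (- x) - exp (- y) \<le> exp (- x) * (y - x)" if "x \<le> y" for x y :: real
  proof -
    have "1 - exp (x - y) \<le> y - x" using exp_ge_add_one_self[of "x - y"] by linarith
    then have "exp (- x) * (1 - exp (x - y)) \<le> exp (- x) * (y - x)" by (intro mult_left_mono) auto
    then show ?thesis by (simp add: algebra_simps exp_add[symmetric])
  qed
  show ?thesis
    using one_side[of a b] one_side[of b a] by (cases "a \<le> b") (auto simp: abs_if max_def)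
qed

lemma one_plus_power_le:
  fixes r :: real
  assumes "0 \<le> r" "0 < n"
  shows "1 + r ^ n \<le> (1 + r) ^ n"
  using assms(2)
proof (induction n)
  case (Suc n)
  show ?case
  proof (cases "n = 0")
    case False
    then have "(1 + r ^ n) * (1 + r) \<le> (1 + r) ^ n * (1 + r)"
      using Suc.IH assms(1) by (intro mult_right_mono) auto
    moreover have "1 + r ^ Suc n \<le> (1 + r ^ n) * (1 + r)"
      using assms(1) by (simp add: algebra_simps)
    ultimately show ?thesis by (simp add: mult.commute)
  qed simp
qed simp

lemma abs_cross_diff_le:
  fixes q1 q2 R1 R2 E :: real
  assumes "0 < q1" "0 < q2" "0 < E" "1 / E \<le> R1" "1 / E \<le> R2"
    and "(q1 * R2)\<^sup>2 - (q2 * R1)\<^sup>2 = 4 * (q1\<^sup>2 - q2\<^sup>2)"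
  shows "\<bar>q1 * R2 - q2 * R1\<bar> \<le> 4 * \<bar>q1 - q2\<bar> * E"
proof -
  define Y where "Y = q1 * R2 + q2 * R1"
  have "q1 * (1 / E) + q2 * (1 / E) \<le> Y"
    unfolding Y_def using assms by (intro add_mono mult_left_mono) auto
  then have Y: "q1 + q2 \<le> E * Y" using assms(3) by (simp add: field_simps)
  have "0 < E * Y" using Y assms(1,2) by linarith
  then have Y_pos: "0 < Y" using assms(3) by (rule zero_less_mult_pos)
  have "\<bar>q1 * R2 - q2 * R1\<bar> * Y = \<bar>(q1 * R2 - q2 * R1) * Y\<bar>" using Y_pos by (simp add: abs_mult)
  also have "(q1 * R2 - q2 * R1) * Y = 4 * (q1 - q2) * (q1 + q2)"
    using assms(6) unfolding Y_def by (simp add: power2_eq_square algebra_simps)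
  also have "\<bar>4 * (q1 - q2) * (q1 + q2)\<bar> = 4 * \<bar>q1 - q2\<bar> * (q1 + q2)"
    using assms(1,2) unfolding abs_mult by simp
  also have "\<dots> \<le> 4 * \<bar>q1 - q2\<bar> * (E * Y)"
    using Y by (intro mult_left_mono) auto
  finally show ?thesis using Y_pos by simp
qed

lemma weighted_sum_le_sum_mult:
  fixes a b c x y z :: real
  assumes "0 \<le> a" "0 \<le> b" "0 \<le> c" "0 \<le> x" "0 \<le> y" "0 \<le> z"
  shows "a * x + b * y + c * z \<le> (a + b + c) * (x + y + z)"
  using assms by (simp add: algebra_simps add_nonneg_nonneg)

lemma bdd_above_continuous_on_tendsto:
  fixes f :: "real \<Rightarrow> real"
  assumes "continuous_on {0<..} f" "(f \<longlongrightarrow> a) (at_right 0)" "(f \<longlongrightarrow> b) at_top"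
  shows "bdd_above (f ` {0<..})"
proof -
  obtain u where u: "0 < u" "\<And>y. 0 < y \<Longrightarrow> y < u \<Longrightarrow> f y < a + 1"
    using order_tendstoD(2)[OF assms(2), of "a + 1"] unfolding eventually_at_right_field by auto
  obtain v where v: "\<And>y. v \<le> y \<Longrightarrow> f y < b + 1"
    using order_tendstoD(2)[OF assms(3), of "b + 1"] unfolding eventually_at_top_linorder by auto
  have "compact (f ` {u..max u v})"
    using u(1) by (intro compact_continuous_image continuous_on_subset[OF assms(1)]) auto
  then obtain M where M: "\<And>y. y \<in> {u..max u v} \<Longrightarrow> f y \<le> M"
    using compact_imp_bounded[THEN bounded_imp_bdd_above] unfolding bdd_above_def by fast
  show ?thesis
  proof (rule bdd_aboveI)
    fix z assume "z \<in> f ` {0<..}"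
    then obtain y where "0 < y" "z = f y" by auto
    then show "z \<le> max M (max (a + 1) (b + 1))"
      using u(2)[of y] v[of y] M[of y] by (cases "y < u"; cases "v \<le> y") auto
  qed
qed

lemma has_integral_inverse_one_plus_power2:
  fixes r :: real
  assumes "0 \<le> r"
  shows "((\<lambda>s. 1 / (1 + s)\<^sup>2) has_integral (1 - 1 / (1 + r))) {0..r}"
proof -
  have "((\<lambda>s. 1 / (1 + s)\<^sup>2) has_integral (- 1 / (1 + r) - (- 1 / (1 + 0)))) {0..r}"
  proof (rule fundamental_theorem_of_calculus[OF assms])
    fix x assume "x \<in> {0..r}"
    then have "1 + x \<noteq> 0" by auto
    then have "((\<lambda>s. - 1 / (1 + s)) has_real_derivative 1 / (1 + x)\<^sup>2) (at x within {0..r})"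
      by (auto intro!: derivative_eq_intros simp: power2_eq_square field_simps)
    then show "((\<lambda>s. - 1 / (1 + s)) has_vector_derivative 1 / (1 + x)\<^sup>2) (at x within {0..r})"
      by (simp add: has_real_derivative_iff_has_vector_derivative)
  qed
  then show ?thesis by simp
qed

lemma classQ_bounds: "Q \<in> classQ \<Longrightarrow> 0 < s \<Longrightarrow> 0 < Q s \<and> Q s \<le> 1"
  by (auto simp: classQ_def)

lemma classQ_has_real_derivative:
  "Q \<in> classQ \<Longrightarrow> 0 < s \<Longrightarrow> (Q has_real_derivative deriv Q s) (at s)"
  by (auto simp: classQ_def DERIV_deriv_iff_real_differentiable)

lemma classQ_continuous_on: "Q \<in> classQ \<Longrightarrow> continuous_on {0<..} Q"
  by (metis DERIV_continuous classQ_has_real_derivative continuous_at_imp_continuous_on greaterThan_iff)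

lemma classQ_mono:
  assumes Q: "Q \<in> classQ" and "0 < x" "x \<le> y"
  shows "Q x \<le> Q y"
proof (rule DERIV_nonneg_imp_increasing_open[OF \<open>x \<le> y\<close>])
  fix t assume "x < t" "t < y"
  then show "\<exists>y. DERIV Q t :> y \<and> 0 \<le> y"
    using assms classQ_has_real_derivative[OF Q, of t] by (auto simp: classQ_def less_imp_le)
next
  show "continuous_on {x..y} Q"
    using classQ_continuous_on[OF Q] by (rule continuous_on_subset) (use assms in auto)
qed

lemma classQ_bdd_above_deriv:
  assumes "Q \<in> classQ"
  shows "bdd_above ((\<lambda>r. r * \<bar>deriv Q r\<bar>) ` {0<..})"
proof -
  have "bdd_above ((\<lambda>r. r * deriv Q r) ` {0<..})"
    using assms unfolding classQ_def
    by (intro bdd_above_continuous_on_tendsto continuous_intros) auto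
  moreover have "r * \<bar>deriv Q r\<bar> = r * deriv Q r" if "0 < r" for r
    using assms that by (auto simp: classQ_def)
  ultimately show ?thesis by (simp add: bdd_above_def)
qed

lemma NN_upper:
  assumes "bdd_above ((\<lambda>r. r * \<bar>deriv F r\<bar>) ` {0<..})" "0 < r"
  shows "r * \<bar>deriv F r\<bar> \<le> NN F"
  unfolding NN_def using assms by (intro cSUP_upper) auto

lemma NN_classQ_diff_upper:
  assumes Q1: "Q1 \<in> classQ" and Q2: "Q2 \<in> classQ" and "0 < r"
  shows "r * \<bar>deriv Q1 r - deriv Q2 r\<bar> \<le> NN (\<lambda>s. Q1 s - Q2 s)"
proof -
  have deriv_diff: "deriv (\<lambda>s. Q1 s - Q2 s) x = deriv Q1 x - deriv Q2 x" if "0 < x" for x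
    using classQ_has_real_derivative[OF Q1 that] classQ_has_real_derivative[OF Q2 that]
    by (intro DERIV_imp_deriv derivative_intros)
  have "bdd_above ((\<lambda>r. r * \<bar>deriv (\<lambda>s. Q1 s - Q2 s) r\<bar>) ` {0<..})"
  proof (rule bdd_aboveI)
    fix y assume "y \<in> (\<lambda>r. r * \<bar>deriv (\<lambda>s. Q1 s - Q2 s) r\<bar>) ` {0<..}"
    then obtain x where x: "0 < x" "y = x * \<bar>deriv Q1 x - deriv Q2 x\<bar>" using deriv_diff by auto
    have "x * \<bar>deriv Q1 x - deriv Q2 x\<bar> \<le> x * \<bar>deriv Q1 x\<bar> + x * \<bar>deriv Q2 x\<bar>"
      using x(1) by (simp add: distrib_left[symmetric] mult_left_mono abs_triangle_ineq4)
    then show "y \<le> NN Q1 + NN Q2"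
      using NN_upper[OF classQ_bdd_above_deriv[OF Q1] x(1)]
        NN_upper[OF classQ_bdd_above_deriv[OF Q2] x(1)] x(2) by linarith
  qed
  from NN_upper[OF this \<open>0 < r\<close>] show ?thesis using deriv_diff[OF \<open>0 < r\<close>] by simp
qed

lemma Linf_classQ_diff:
  assumes Q1: "Q1 \<in> classQ" and Q2: "Q2 \<in> classQ"
  shows "\<And>x. 0 < x \<Longrightarrow> \<bar>Q1 x - Q2 x\<bar> \<le> Linf (\<lambda>s. Q1 s - Q2 s)"
    and "Linf (\<lambda>s. Q1 s - Q2 s) \<le> 1"
proof -
  have le_one: "\<bar>Q1 x - Q2 x\<bar> \<le> 1" if "0 < x" for x
    using classQ_bounds[OF Q1 that] classQ_bounds[OF Q2 that] by (simp add: abs_le_iff)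
  then have "bdd_above ((\<lambda>x. \<bar>Q1 x - Q2 x\<bar>) ` {0<..})" by (auto intro!: bdd_aboveI[of _ 1])
  then show "\<And>x. 0 < x \<Longrightarrow> \<bar>Q1 x - Q2 x\<bar> \<le> Linf (\<lambda>s. Q1 s - Q2 s)"
    unfolding Linf_def by (auto intro!: cSUP_upper)
  show "Linf (\<lambda>s. Q1 s - Q2 s) \<le> 1" unfolding Linf_def by (rule cSUP_least) (use le_one in auto)
qed

section \<open>The vorticity profile in terms of \<open>Q\<close>\<close>

text \<open>In the notation of the paper \<open>\<Omega> = exp (- Omega_exponent Q)\<close>, \<open>W = \<Omega> \<cdot> shapeQ Q\<close> and
  \<open>W' = \<Omega> \<cdot> dW_factor Q\<close>. The integrand \<open>rateQ Q\<close> uses \<open>Q\<close> extended by zero, which makes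
  it continuous up to \<open>s = 0\<close>, where its denominator equals 2.\<close>

definition radQ :: "(real \<Rightarrow> real) \<Rightarrow> real \<Rightarrow> real" where
  "radQ Q s = sqrt (s\<^sup>2 * (Q s)\<^sup>2 + 4 - 4 * (Q s)\<^sup>2)"

definition denQ :: "(real \<Rightarrow> real) \<Rightarrow> real \<Rightarrow> real" where
  "denQ Q s = s * Q s + radQ Q s"

definition zero_ext :: "(real \<Rightarrow> real) \<Rightarrow> real \<Rightarrow> real" where
  "zero_ext Q s = (if 0 < s then Q s else 0)"

definition rateQ :: "(real \<Rightarrow> real) \<Rightarrow> real \<Rightarrow> real" where
  "rateQ Q s = 4 * zero_ext Q s / denQ (zero_ext Q) s"

definition Omega_exponent :: "(real \<Rightarrow> real) \<Rightarrow> real \<Rightarrow> real" where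
  "Omega_exponent Q r = integral {0..r} (rateQ Q)"

definition shapeQ :: "(real \<Rightarrow> real) \<Rightarrow> real \<Rightarrow> real" where
  "shapeQ Q s = 2 - 4 * s * Q s / denQ Q s"

definition dshapeQ :: "(real \<Rightarrow> real) \<Rightarrow> real \<Rightarrow> real" where
  "dshapeQ Q s = - 2 * (shapeQ Q s * (Q s / radQ Q s))
                 - 16 * (s * deriv Q s * (1 / radQ Q s * (1 / denQ Q s)\<^sup>2))"

definition dW_factor :: "(real \<Rightarrow> real) \<Rightarrow> real \<Rightarrow> real" where
  "dW_factor Q s = dshapeQ Q s - rateQ Q s * shapeQ Q s"

lemma radQ_sq:
  assumes "Q \<in> classQ" "0 < s"
  shows "(radQ Q s)\<^sup>2 = s\<^sup>2 * (Q s)\<^sup>2 + 4 - 4 * (Q s)\<^sup>2" and "0 < radQ Q s"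
proof -
  have "0 < Q s" "(Q s)\<^sup>2 \<le> 1" using classQ_bounds[OF assms] by (auto simp: power_le_one)
  then have "0 < s\<^sup>2 * (Q s)\<^sup>2 + 4 - 4 * (Q s)\<^sup>2" using assms(2) by (smt (verit) zero_less_mult_iff zero_less_power)
  then show "(radQ Q s)\<^sup>2 = s\<^sup>2 * (Q s)\<^sup>2 + 4 - 4 * (Q s)\<^sup>2" and "0 < radQ Q s"
    by (simp_all add: radQ_def)
qed

lemma radQ_le_denQ: "Q \<in> classQ \<Longrightarrow> 0 < s \<Longrightarrow> radQ Q s \<le> denQ Q s"
  using classQ_bounds[of Q s] by (simp add: denQ_def)

lemma denQ_pos: "Q \<in> classQ \<Longrightarrow> 0 < s \<Longrightarrow> 0 < denQ Q s"
  using radQ_sq(2) radQ_le_denQ by (fastforce intro: less_le_trans)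

lemma rateQ_eq: "0 < s \<Longrightarrow> rateQ Q s = 4 * Q s / denQ Q s"
  by (simp add: rateQ_def zero_ext_def denQ_def radQ_def)

lemma rateQ_zero: "rateQ Q 0 = 0"
  by (simp add: rateQ_def zero_ext_def)

lemma zero_ext_continuous_on:
  assumes Q: "Q \<in> classQ"
  shows "continuous_on {0..} (zero_ext Q)"
  unfolding continuous_on_eq_continuous_within
proof
  fix x :: real assume "x \<in> {0..}"
  then consider "x = 0" | "0 < x" by force
  then show "continuous (at x within {0..}) (zero_ext Q)"
  proof cases
    case 1
    have "(Q \<longlongrightarrow> 0) (at_right 0)" using Q by (simp add: classQ_def)
    then have "(zero_ext Q \<longlongrightarrow> 0) (at 0 within {0<..})"
      by (rule Lim_transform_within[where d=1]) (auto simp: zero_ext_def)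
    then show ?thesis using 1 by (simp add: continuous_within zero_ext_def at_within_Ici_at_right)
  next
    case 2
    have "isCont Q x" using classQ_has_real_derivative[OF Q 2] by (rule DERIV_isCont)
    moreover have "eventually (\<lambda>s. Q s = zero_ext Q s) (nhds x)"
      using eventually_nhds_in_open[of "{0<..}" x] 2 by (auto elim!: eventually_mono simp: zero_ext_def)
    ultimately have "isCont (zero_ext Q) x" using isCont_cong by blast
    then show ?thesis by (rule continuous_at_imp_continuous_within)
  qed
qed

lemma rateQ_continuous_on:
  assumes Q: "Q \<in> classQ"
  shows "continuous_on {0..} (rateQ Q)"
proof -
  have "continuous_on {0..} (denQ (zero_ext Q))"
    unfolding denQ_def radQ_def by (intro continuous_intros zero_ext_continuous_on[OF Q])
  moreover have "denQ (zero_ext Q) s \<noteq> 0" if "0 \<le> s" for s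
  proof (cases "s = 0")
    case False
    then have "denQ (zero_ext Q) s = denQ Q s" using that by (simp add: zero_ext_def denQ_def radQ_def)
    then show ?thesis using denQ_pos[OF Q, of s] False that by simp
  qed (simp add: denQ_def radQ_def zero_ext_def)
  ultimately show ?thesis
    unfolding rateQ_def[abs_def]
    by (intro continuous_on_divide continuous_on_mult_left zero_ext_continuous_on[OF Q]) auto
qed

lemma rateQ_integrable: "Q \<in> classQ \<Longrightarrow> 0 \<le> a \<Longrightarrow> rateQ Q integrable_on {a..b}"
  by (rule integrable_continuous_interval, rule continuous_on_subset[OF rateQ_continuous_on]) auto

lemma rateQ_nonneg:
  assumes Q: "Q \<in> classQ" and "0 \<le> s"
  shows "0 \<le> rateQ Q s"
proof (cases "s = 0")
  case False
  then have s: "0 < s" using assms(2) by simp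
  have "0 < Q s" "0 < denQ Q s" using classQ_bounds[OF Q s] denQ_pos[OF Q s] by auto
  then show ?thesis by (simp add: rateQ_eq[OF s])
qed (simp add: rateQ_zero)

lemma Omega_exponent_nonneg: "Q \<in> classQ \<Longrightarrow> 0 \<le> r \<Longrightarrow> 0 \<le> Omega_exponent Q r"
  unfolding Omega_exponent_def
  by (rule integral_nonneg[OF rateQ_integrable]) (simp_all add: rateQ_nonneg)

lemma Omega_exponent_has_real_derivative:
  assumes Q: "Q \<in> classQ" and r: "0 < r"
  shows "(Omega_exponent Q has_real_derivative rateQ Q r) (at r)"
proof -
  have "continuous_on {0..r+1} (rateQ Q)"
    using rateQ_continuous_on[OF Q] by (rule continuous_on_subset) auto
  from integral_has_real_derivative[OF this, of r]
  have "((\<lambda>x. integral {0..x} (rateQ Q)) has_real_derivative rateQ Q r) (at r within {0..r+1})"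
    using r by simp
  moreover have "r \<in> interior {0..r+1}" using r by simp
  ultimately show ?thesis unfolding Omega_exponent_def[abs_def] by (simp only: at_within_interior)
qed

lemma sqrt_JQ_eq:
  assumes Q: "Q \<in> classQ" and s: "0 < s"
  shows "sqrt (s\<^sup>2 + 4 * JQ Q s) = radQ Q s / Q s"
proof -
  have q: "0 < Q s" using classQ_bounds[OF Q s] by simp
  have "s\<^sup>2 + 4 * JQ Q s = (radQ Q s / Q s)\<^sup>2"
    using q radQ_sq[OF Q s] by (simp add: JQ_def power_divide field_simps)
  then show ?thesis using q radQ_sq(2)[OF Q s] by simp
qed

lemma inv_sum_sqrt_JQ_eq:
  assumes Q: "Q \<in> classQ" and s: "0 < s"
  shows "1 / (s + sqrt (s\<^sup>2 + 4 * JQ Q s)) = Q s / denQ Q s"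
proof -
  have "0 < Q s" using classQ_bounds[OF Q s] by simp
  then have "s + radQ Q s / Q s = denQ Q s / Q s" by (simp add: denQ_def field_simps)
  then show ?thesis by (simp add: sqrt_JQ_eq[OF Q s])
qed

lemma OmegaQ_eq:
  assumes Q: "Q \<in> classQ"
  shows "OmegaQ Q r = exp (- Omega_exponent Q r)"
proof -
  have "integral {0..r} (\<lambda>s. 4 / (s + sqrt (s\<^sup>2 + 4 * JQ Q s))) = integral {0..r} (rateQ Q)"
  proof (rule integral_spike[of "{0}"])
    fix s assume "s \<in> {0..r} - {0}"
    then have s: "0 < s" by auto
    have "4 / (s + sqrt (s\<^sup>2 + 4 * JQ Q s)) = 4 * (1 / (s + sqrt (s\<^sup>2 + 4 * JQ Q s)))" by simp
    then show "rateQ Q s = 4 / (s + sqrt (s\<^sup>2 + 4 * JQ Q s))"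
      by (simp only: inv_sum_sqrt_JQ_eq[OF Q s] rateQ_eq[OF s])
  qed auto
  then show ?thesis by (simp add: OmegaQ_def Omega_exponent_def)
qed

lemma WQ_eq:
  assumes Q: "Q \<in> classQ" and r: "0 < r"
  shows "WQ Q r = exp (- Omega_exponent Q r) * shapeQ Q r"
proof -
  have "4 * r / (r + sqrt (r\<^sup>2 + 4 * JQ Q r)) = 4 * r * (1 / (r + sqrt (r\<^sup>2 + 4 * JQ Q r)))"
    by simp
  then show ?thesis
    by (simp add: WQ_def OmegaQ_eq[OF Q] shapeQ_def inv_sum_sqrt_JQ_eq[OF Q r])
qed

lemma shapeQ_eq:
  assumes Q: "Q \<in> classQ" and s: "0 < s"
  shows "shapeQ Q s = 8 * (1 - (Q s)\<^sup>2) / (denQ Q s)\<^sup>2"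
proof -
  define q R where "q = Q s" and "R = radQ Q s"
  have R: "R\<^sup>2 = s\<^sup>2 * q\<^sup>2 + 4 - 4 * q\<^sup>2" using radQ_sq[OF Q s] by (simp add: R_def q_def)
  have B: "0 < s * q + R" using denQ_pos[OF Q s] by (simp add: denQ_def q_def R_def)
  have "(R - s * q) * (s * q + R) = 4 * (1 - q\<^sup>2)"
    using R by (simp add: power2_eq_square algebra_simps)
  then have "R - s * q = 4 * (1 - q\<^sup>2) / (s * q + R)" using B by (simp add: field_simps)
  moreover have "shapeQ Q s = 2 * (R - s * q) / (s * q + R)"
    using B by (simp add: shapeQ_def denQ_def q_def R_def field_simps)
  ultimately show ?thesis using B by (simp add: denQ_def q_def R_def power2_eq_square)
qed

lemma radQ_has_real_derivative:
  assumes Q: "Q \<in> classQ" and r: "0 < r"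
  shows "(radQ Q has_real_derivative
           (r * (Q r)\<^sup>2 + r\<^sup>2 * Q r * deriv Q r - 4 * Q r * deriv Q r) / radQ Q r) (at r)"
proof -
  have "0 < r\<^sup>2 * (Q r)\<^sup>2 + 4 - 4 * (Q r)\<^sup>2" "0 < radQ Q r"
    using radQ_sq[OF Q r] by (auto simp: radQ_def)
  then show ?thesis
    unfolding radQ_def[abs_def] using classQ_has_real_derivative[OF Q r]
    by (auto intro!: derivative_eq_intros simp: field_simps)
qed

lemma shapeQ_has_real_derivative:
  assumes Q: "Q \<in> classQ" and r: "0 < r"
  shows "(shapeQ Q has_real_derivative dshapeQ Q r) (at r)"
proof -
  define q p R B where "q = Q r" and "p = deriv Q r" and "R = radQ Q r" and "B = denQ Q r"
  have R2: "R\<^sup>2 = r\<^sup>2 * q\<^sup>2 + 4 - 4 * q\<^sup>2" "0 < R" using radQ_sq[OF Q r] by (auto simp: R_def q_def)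
  have BR: "B = r * q + R" by (simp add: B_def denQ_def q_def R_def)
  have B: "0 < B" using denQ_pos[OF Q r] by (simp add: B_def)
  have dQ: "(Q has_real_derivative p) (at r)" using classQ_has_real_derivative[OF Q r] by (simp add: p_def)
  define dR where "dR = (r * q\<^sup>2 + r\<^sup>2 * q * p - 4 * q * p) / R"
  have dRad: "(radQ Q has_real_derivative dR) (at r)"
    using radQ_has_real_derivative[OF Q r] by (simp add: dR_def q_def p_def R_def)
  have dB: "(denQ Q has_real_derivative q + r * p + dR) (at r)"
    unfolding denQ_def[abs_def] using dQ dRad by (auto intro!: derivative_eq_intros simp: q_def)
  define D where "D = - ((4 * q + 4 * r * p) * B - 4 * r * q * (q + r * p + dR)) / (B * B)"
  have "(shapeQ Q has_real_derivative D) (at r)"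
    unfolding shapeQ_def[abs_def] using dQ dB B
    by (auto intro!: derivative_eq_intros simp: q_def B_def D_def field_simps)
  moreover have "D = dshapeQ Q r"
  proof -
    have "((4 * q + 4 * r * p) * B - 4 * r * q * (q + r * p + dR)) * R
          = 4 * ((q + r * p) * R\<^sup>2 - r * q * (r * q\<^sup>2 + r\<^sup>2 * q * p - 4 * q * p))"
      using R2 unfolding BR dR_def by (simp add: field_simps power2_eq_square)
    also have "\<dots> = 16 * ((1 - q\<^sup>2) * q + r * p)"
      unfolding R2(1) by (simp add: power2_eq_square algebra_simps)
    finally have num: "(4 * q + 4 * r * p) * B - 4 * r * q * (q + r * p + dR) = 16 * ((1 - q\<^sup>2) * q + r * p) / R"
      using R2 by (simp add: field_simps)
    have "D = - 16 * ((1 - q\<^sup>2) * q + r * p) / (R * B\<^sup>2)"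
      unfolding D_def num using R2 B by (simp add: field_simps power2_eq_square)
    moreover have "dshapeQ Q r = - 16 * ((1 - q\<^sup>2) * q + r * p) / (R * B\<^sup>2)"
      unfolding dshapeQ_def shapeQ_eq[OF Q r] q_def[symmetric] p_def[symmetric]
        R_def[symmetric] B_def[symmetric]
      using R2(2) B by (simp add: field_simps)
    ultimately show ?thesis by simp
  qed
  ultimately show ?thesis by simp
qed

lemma WQ_has_real_derivative:
  assumes Q: "Q \<in> classQ" and r: "0 < r"
  shows "(WQ Q has_real_derivative exp (- Omega_exponent Q r) * dW_factor Q r) (at r)"
proof -
  have "((\<lambda>s. exp (- Omega_exponent Q s) * shapeQ Q s) has_real_derivative
           exp (- Omega_exponent Q r) * dW_factor Q r) (at r)"
    unfolding dW_factor_def using Omega_exponent_has_real_derivative[OF Q r] shapeQ_has_real_derivative[OF Q r]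
    by (auto intro!: derivative_eq_intros simp: algebra_simps)
  then show ?thesis
    by (rule has_field_derivative_transform_within_open[where S="{0<..}"]) (use r WQ_eq[OF Q] in auto)
qed

section \<open>Bounds for a single normalised profile\<close>

text \<open>\<open>decay \<delta> s\<close> is the bound for \<open>1 / radQ Q s\<close> (\<open>inv_radQ_le\<close>); all pointwise estimates
  below are powers of it.\<close>

definition decay :: "real \<Rightarrow> real \<Rightarrow> real" where
  "decay \<delta> s = 2 / (\<delta> * (1 + s))"

lemma decay_pos: "0 < \<delta> \<Longrightarrow> 0 \<le> s \<Longrightarrow> 0 < decay \<delta> s"
  by (simp add: decay_def)

lemma one_plus_mult_decay:
  assumes "0 < \<delta>" "0 \<le> s"
  shows "(1 + s) * decay \<delta> s = 2 / \<delta>"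
proof -
  have "1 + s \<noteq> 0" using assms(2) by simp
  then show ?thesis using assms(1) by (simp add: decay_def divide_simps)
qed

lemma mult_decay_le: "0 < \<delta> \<Longrightarrow> 0 \<le> s \<Longrightarrow> s * decay \<delta> s \<le> 2 / \<delta>"
  using one_plus_mult_decay[of \<delta> s] decay_pos[of \<delta> s] by (simp add: algebra_simps)

lemma decay_le:
  assumes "0 < \<delta>" "0 \<le> s"
  shows "decay \<delta> s \<le> 2 / \<delta>"
proof -
  have "0 \<le> s * decay \<delta> s" using assms decay_pos[OF assms] by simp
  then show ?thesis using one_plus_mult_decay[OF assms] by (simp add: algebra_simps)
qed

lemma le_decay_iff: "0 < \<delta> \<Longrightarrow> 0 \<le> s \<Longrightarrow> 0 < x \<Longrightarrow> 1 / x \<le> decay \<delta> s \<longleftrightarrow> \<delta> * (1 + s) / 2 \<le> x"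
  by (simp add: decay_def divide_simps mult.commute)

lemma one_plus_power_mult_decay_le:
  assumes "0 < \<delta>" "0 \<le> r" "0 < n" "0 \<le> X"
  shows "(1 + r ^ n) * (X * (decay \<delta> r) ^ n) \<le> (2 / \<delta>) ^ n * X"
proof -
  have "(1 + r ^ n) * (X * (decay \<delta> r) ^ n) \<le> (1 + r) ^ n * (X * (decay \<delta> r) ^ n)"
    using one_plus_power_le[OF assms(2,3)] assms(4) decay_pos[OF assms(1,2)] by (intro mult_right_mono) auto
  also have "\<dots> = ((1 + r) * decay \<delta> r) ^ n * X" by (simp add: power_mult_distrib)
  finally show ?thesis using one_plus_mult_decay[OF assms(1,2)] by simp
qed

locale admissible =
  fixes \<delta> :: real and Q :: "real \<Rightarrow> real"
  assumes classQ: "Q \<in> classQ" and delta_pos: "0 < \<delta>"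
    and delta_le_Q_one: "\<delta> \<le> Q 1" and Q_one_le_sqrt: "Q 1 \<le> sqrt (1 - \<delta>\<^sup>2)"
begin

lemma delta_le_one: "\<delta> \<le> 1"
  using delta_le_Q_one classQ_bounds[OF classQ, of 1] by simp

lemma Q_one_sq_le: "(Q 1)\<^sup>2 \<le> 1 - \<delta>\<^sup>2"
proof -
  have "0 < Q 1" using classQ_bounds[OF classQ, of 1] by simp
  then have "0 \<le> 1 - \<delta>\<^sup>2" using Q_one_le_sqrt by (smt (verit) real_sqrt_lt_0_iff)
  moreover have "(Q 1)\<^sup>2 \<le> (sqrt (1 - \<delta>\<^sup>2))\<^sup>2" using Q_one_le_sqrt \<open>0 < Q 1\<close> by (intro power_mono) auto
  ultimately show ?thesis by simp
qed

text \<open>Below \<open>s = 1\<close> the bound \<open>Q s \<le> Q 1\<close> keeps \<open>4 - 4 (Q s)\<^sup>2\<close> away from 0; above it,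
  \<open>\<delta> \<le> Q s\<close> makes the term \<open>s\<^sup>2 (Q s)\<^sup>2\<close> large.\<close>

lemma radQ_lower:
  assumes s: "0 < s"
  shows "\<delta> * (1 + s) / 2 \<le> radQ Q s"
proof -
  have q: "0 < Q s" "Q s \<le> 1" using classQ_bounds[OF classQ s] by auto
  show ?thesis
  proof (cases "s \<le> 1")
    case True
    have "(Q s)\<^sup>2 \<le> (Q 1)\<^sup>2" using classQ_mono[OF classQ s True] q by (intro power_mono) auto
    then have "(2 * \<delta>)\<^sup>2 \<le> s\<^sup>2 * (Q s)\<^sup>2 + 4 - 4 * (Q s)\<^sup>2"
      using Q_one_sq_le by (simp add: power_mult_distrib) (smt (verit) zero_le_power2 mult_nonneg_nonneg)
    then have "2 * \<delta> \<le> radQ Q s" unfolding radQ_def by (rule real_le_rsqrt)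
    moreover have "\<delta> * (1 + s) / 2 \<le> 2 * \<delta>" using True delta_pos by (simp add: field_simps)
    ultimately show ?thesis by linarith
  next
    case False
    have "\<delta> \<le> Q s" using classQ_mono[OF classQ, of 1 s] False delta_le_Q_one by auto
    then have "(s * \<delta>)\<^sup>2 \<le> (s * Q s)\<^sup>2" using delta_pos s by (intro power_mono) auto
    moreover have "(Q s)\<^sup>2 \<le> 1" using q by (simp add: power_le_one)
    ultimately have "(s * \<delta>)\<^sup>2 \<le> s\<^sup>2 * (Q s)\<^sup>2 + 4 - 4 * (Q s)\<^sup>2"
      by (simp add: power_mult_distrib)
    then have "s * \<delta> \<le> radQ Q s" unfolding radQ_def by (rule real_le_rsqrt)
    moreover have "\<delta> * (1 + s) / 2 \<le> s * \<delta>" using False delta_pos by (simp add: field_simps)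
    ultimately show ?thesis by linarith
  qed
qed

lemma inv_radQ_le: "0 < s \<Longrightarrow> 1 / radQ Q s \<le> decay \<delta> s"
  using radQ_lower radQ_sq(2)[OF classQ] delta_pos by (simp add: le_decay_iff)

lemma inv_denQ_le: "0 < s \<Longrightarrow> 1 / denQ Q s \<le> decay \<delta> s"
  using radQ_lower[of s] radQ_le_denQ[OF classQ, of s] denQ_pos[OF classQ, of s] delta_pos
  by (simp add: le_decay_iff)

lemma Q_div_radQ_le:
  assumes "0 < s"
  shows "Q s / radQ Q s \<le> decay \<delta> s"
proof -
  have "Q s * (1 / radQ Q s) \<le> 1 * decay \<delta> s"
    using classQ_bounds[OF classQ assms] radQ_sq(2)[OF classQ assms] inv_radQ_le[OF assms]
    by (intro mult_mono) auto
  then show ?thesis by simp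
qed

lemma decay_sq_le: "0 \<le> s \<Longrightarrow> (decay \<delta> s)\<^sup>2 \<le> 4 / \<delta>\<^sup>2"
  using decay_le[OF delta_pos] decay_pos[OF delta_pos] power_mono[of "decay \<delta> s" "2 / \<delta>" 2]
  by (fastforce simp: power_divide less_imp_le)

lemma abs_rateQ_le:
  assumes "0 < s"
  shows "\<bar>rateQ Q s\<bar> \<le> 4 * decay \<delta> s"
proof -
  have "\<bar>rateQ Q s\<bar> = 4 * Q s * (1 / denQ Q s)"
    using classQ_bounds[OF classQ assms] denQ_pos[OF classQ assms] by (simp add: rateQ_eq[OF assms])
  also have "\<dots> \<le> 4 * 1 * decay \<delta> s"
    using classQ_bounds[OF classQ assms] denQ_pos[OF classQ assms] inv_denQ_le[OF assms]
    by (intro mult_mono) auto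
  finally show ?thesis by simp
qed

lemma abs_shapeQ_le:
  assumes "0 < s"
  shows "\<bar>shapeQ Q s\<bar> \<le> 8 * (decay \<delta> s)\<^sup>2"
proof -
  have q: "0 < Q s" "Q s \<le> 1" using classQ_bounds[OF classQ assms] by auto
  have "\<bar>shapeQ Q s\<bar> = 8 * (1 - (Q s)\<^sup>2) * (1 / denQ Q s)\<^sup>2"
    using q denQ_pos[OF classQ assms]
    by (simp add: shapeQ_eq[OF classQ assms] power_le_one power_divide abs_mult)
  also have "\<dots> \<le> 8 * 1 * (decay \<delta> s)\<^sup>2"
    using q denQ_pos[OF classQ assms] inv_denQ_le[OF assms]
    by (intro mult_mono power_mono) (auto simp: power_le_one)
  finally show ?thesis by simp
qed

lemma radQ_denQ_weight_le:
  assumes s: "0 < s"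
  shows "\<bar>1 / radQ Q s * (1 / denQ Q s)\<^sup>2\<bar> \<le> (decay \<delta> s) ^ 3"
proof -
  have "\<bar>1 / radQ Q s * (1 / denQ Q s)\<^sup>2\<bar> \<le> decay \<delta> s * (decay \<delta> s)\<^sup>2"
    unfolding abs_mult power_abs
    using inv_radQ_le[OF s] inv_denQ_le[OF s] radQ_sq(2)[OF classQ s] denQ_pos[OF classQ s]
      decay_pos[OF delta_pos, of s] s
    by (intro mult_mono power_mono) auto
  then show ?thesis by (simp add: power3_eq_cube power2_eq_square)
qed

lemma abs_dshapeQ_le:
  assumes s: "0 < s" and N: "s * \<bar>deriv Q s\<bar> \<le> N"
  shows "\<bar>dshapeQ Q s\<bar> \<le> (16 + 16 * N) * (decay \<delta> s) ^ 3"
proof -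
  define E where "E = decay \<delta> s"
  have N_nonneg: "0 \<le> N" using order_trans[OF _ N] s by simp
  have ratio: "0 \<le> Q s / radQ Q s" "Q s / radQ Q s \<le> E"
    using classQ_bounds[OF classQ s] radQ_sq(2)[OF classQ s] Q_div_radQ_le[OF s] by (auto simp: E_def)
  have triangle: "\<bar>- 2 * a - 16 * b\<bar> \<le> 2 * \<bar>a\<bar> + 16 * \<bar>b\<bar>" for a b :: real
    by (simp add: abs_if)
  have "\<bar>dshapeQ Q s\<bar> \<le> 2 * \<bar>shapeQ Q s * (Q s / radQ Q s)\<bar>
      + 16 * \<bar>s * deriv Q s * (1 / radQ Q s * (1 / denQ Q s)\<^sup>2)\<bar>"
    unfolding dshapeQ_def by (rule triangle)
  also have "\<dots> = 2 * (\<bar>shapeQ Q s\<bar> * (Q s / radQ Q s))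
      + 16 * (s * \<bar>deriv Q s\<bar> * \<bar>1 / radQ Q s * (1 / denQ Q s)\<^sup>2\<bar>)"
    by (simp only: abs_mult[of "shapeQ Q s"] abs_mult[of "s * deriv Q s"] abs_mult[of s]
        abs_of_nonneg[OF ratio(1)] abs_of_pos[OF s])
  also have "\<dots> \<le> 2 * (8 * E\<^sup>2 * E) + 16 * (N * E ^ 3)"
    using abs_shapeQ_le[OF s] ratio N N_nonneg radQ_denQ_weight_le[OF s]
    by (intro add_mono mult_left_mono mult_mono) (auto simp: E_def)
  finally show ?thesis by (simp add: E_def power3_eq_cube power2_eq_square algebra_simps)
qed

lemma abs_dW_factor_le:
  assumes s: "0 < s" and N: "s * \<bar>deriv Q s\<bar> \<le> N"
  shows "\<bar>dW_factor Q s\<bar> \<le> (48 + 16 * N) * (decay \<delta> s) ^ 3"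
proof -
  have "\<bar>rateQ Q s * shapeQ Q s\<bar> \<le> (4 * decay \<delta> s) * (8 * (decay \<delta> s)\<^sup>2)"
    unfolding abs_mult using abs_rateQ_le[OF s] abs_shapeQ_le[OF s] by (intro mult_mono) auto
  then show ?thesis
    using abs_dshapeQ_le[OF s N] abs_triangle_ineq4[of "dshapeQ Q s" "rateQ Q s * shapeQ Q s"]
    unfolding dW_factor_def by (simp add: power3_eq_cube power2_eq_square algebra_simps)
qed

lemma rateQ_lower:
  assumes s: "1 \<le> s"
  shows "2 * s / (s\<^sup>2 + 1 / \<delta>\<^sup>2) \<le> rateQ Q s"
proof -
  define K q R where "K = 1 / \<delta>\<^sup>2" and "q = Q s" and "R = radQ Q s"
  have s_pos: "0 < s" using s by simp
  have K: "0 < K" using delta_pos by (simp add: K_def)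
  have "\<delta> \<le> q" using classQ_mono[OF classQ, of 1 s] s delta_le_Q_one by (simp add: q_def)
  then have "\<delta>\<^sup>2 \<le> q\<^sup>2" using delta_pos by (intro power_mono) auto
  then have qK: "1 \<le> q\<^sup>2 * K" using delta_pos by (simp add: K_def field_simps)
  have R: "R\<^sup>2 = s\<^sup>2 * q\<^sup>2 + 4 - 4 * q\<^sup>2"
    using radQ_sq[OF classQ s_pos] by (simp add: R_def q_def)
  have q: "0 < q" using classQ_bounds[OF classQ s_pos] by (simp add: q_def)
  have "(q * s\<^sup>2 + 2 * q * K)\<^sup>2 - (s * R)\<^sup>2 = 4 * s\<^sup>2 * (q\<^sup>2 * K + q\<^sup>2 - 1) + 4 * q\<^sup>2 * K\<^sup>2"
    unfolding power_mult_distrib[of s R] R by (simp add: power2_eq_square algebra_simps)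
  also have "\<dots> \<ge> 0"
  proof -
    have "0 \<le> q\<^sup>2 * K + q\<^sup>2 - 1" using qK zero_le_power2[of q] by linarith
    then show ?thesis by simp
  qed
  finally have "(s * R)\<^sup>2 \<le> (q * s\<^sup>2 + 2 * q * K)\<^sup>2" by simp
  then have "s * R \<le> q * s\<^sup>2 + 2 * q * K"
    by (rule power2_le_imp_le) (use q K in simp)
  then have "2 * s * denQ Q s \<le> 4 * q * (s\<^sup>2 + K)"
    by (simp add: denQ_def q_def R_def algebra_simps power2_eq_square)
  moreover have "0 < s\<^sup>2 + K" using K by (simp add: add_nonneg_pos)
  ultimately have "2 * s / (s\<^sup>2 + K) \<le> 4 * q / denQ Q s"
    using denQ_pos[OF classQ s_pos] by (simp add: divide_simps mult.commute)
  then show ?thesis by (simp add: rateQ_eq[OF s_pos] K_def q_def)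
qed

lemma Omega_exponent_lower:
  assumes r: "1 \<le> r"
  shows "ln (r\<^sup>2 + 1 / \<delta>\<^sup>2) - ln (1 + 1 / \<delta>\<^sup>2) \<le> Omega_exponent Q r"
proof -
  define K where "K = 1 / \<delta>\<^sup>2"
  have K: "0 < K" using delta_pos by (simp add: K_def)
  have ftc: "((\<lambda>s. 2 * s / (s\<^sup>2 + K)) has_integral (ln (r\<^sup>2 + K) - ln (1\<^sup>2 + K))) {1..r}"
  proof (rule fundamental_theorem_of_calculus[OF r])
    fix x assume "x \<in> {1..r}"
    have "0 < x\<^sup>2 + K" using K by (simp add: add_nonneg_pos)
    then have "((\<lambda>s. ln (s\<^sup>2 + K)) has_real_derivative 2 * x / (x\<^sup>2 + K)) (at x within {1..r})"
      by (auto intro!: derivative_eq_intros simp: field_simps)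
    then show "((\<lambda>s. ln (s\<^sup>2 + K)) has_vector_derivative 2 * x / (x\<^sup>2 + K)) (at x within {1..r})"
      by (simp add: has_real_derivative_iff_has_vector_derivative)
  qed
  have "ln (r\<^sup>2 + K) - ln (1 + K) \<le> integral {1..r} (rateQ Q)"
    using integral_le[OF has_integral_integrable[OF ftc] rateQ_integrable[OF classQ, of 1 r]]
      rateQ_lower integral_unique[OF ftc] by (simp add: K_def)
  moreover have "integral {0..1} (rateQ Q) + integral {1..r} (rateQ Q) = Omega_exponent Q r"
    unfolding Omega_exponent_def using r rateQ_integrable[OF classQ order_refl, of r]
    by (intro Henstock_Kurzweil_Integration.integral_combine) simp_all
  moreover have "0 \<le> integral {0..1} (rateQ Q)"
    using Omega_exponent_nonneg[OF classQ, of 1] by (simp add: Omega_exponent_def)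
  ultimately show ?thesis by (simp add: K_def)
qed

lemma exp_neg_Omega_exponent_le:
  assumes r: "0 < r"
  shows "exp (- Omega_exponent Q r) \<le> (decay \<delta> r)\<^sup>2"
proof -
  define K where "K = 1 / \<delta>\<^sup>2"
  have K: "1 \<le> K" using delta_pos delta_le_one by (simp add: K_def power_le_one)
  have "exp (- Omega_exponent Q r) \<le> 4 * K / (1 + r)\<^sup>2"
  proof (cases "r \<le> 1")
    case True
    have "(1 + r)\<^sup>2 \<le> 2\<^sup>2" using True r by (intro power_mono) auto
    then have "1 \<le> 4 * K / (1 + r)\<^sup>2" using K r by (simp add: field_simps)
    moreover have "exp (- Omega_exponent Q r) \<le> 1"
      using Omega_exponent_nonneg[OF classQ, of r] r by simp
    ultimately show ?thesis by linarith
  next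
    case False
    have "exp (- Omega_exponent Q r) \<le> exp (ln (1 + K) - ln (r\<^sup>2 + K))"
      using Omega_exponent_lower[of r] False by (simp add: K_def)
    also have "\<dots> = (1 + K) / (r\<^sup>2 + K)" using K by (simp add: exp_diff add_nonneg_pos)
    also have "\<dots> \<le> 2 * K / (1 + r\<^sup>2)"
      using K by (intro frac_le) (auto simp: add_pos_nonneg)
    also have "\<dots> \<le> 4 * K / (1 + r)\<^sup>2"
    proof -
      have "(1 + r)\<^sup>2 \<le> 2 * (1 + r\<^sup>2)"
        using zero_le_power2[of "1 - r"] by (simp add: power2_eq_square algebra_simps)
      then have "2 * K * (1 + r)\<^sup>2 \<le> 4 * K * (1 + r\<^sup>2)"
        using mult_left_mono[of _ _ "2 * K"] K by fastforce
      moreover have "0 < (1 + r)\<^sup>2" "0 < 1 + r\<^sup>2" using r by (auto simp: add_pos_nonneg)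
      ultimately show ?thesis by (simp add: divide_simps)
    qed
    finally show ?thesis .
  qed
  also have "\<dots> = (decay \<delta> r)\<^sup>2"
    using delta_pos by (simp add: decay_def K_def power_divide power_mult_distrib)
  finally show ?thesis .
qed

end

section \<open>Lipschitz dependence on the profile\<close>

definition W_coeff :: "real \<Rightarrow> real" where
  "W_coeff \<delta> = 1024 / \<delta> ^ 3 + 32 / \<delta>"

definition dW_coeff :: "real \<Rightarrow> real" where
  "dW_coeff \<delta> = 80 * (128 / \<delta> ^ 3) + (192 / \<delta> + 768 / \<delta>\<^sup>2) + 16 + 16 * (48 / \<delta>\<^sup>2 + 4 / \<delta>)"

locale admissible_pair = Q1: admissible \<delta> Q1 + Q2: admissible \<delta> Q2 for \<delta> Q1 Q2 +
  fixes L :: real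
  assumes sup_diff: "\<And>x. 0 < x \<Longrightarrow> \<bar>Q1 x - Q2 x\<bar> \<le> L"
begin

lemma L_nonneg: "0 \<le> L"
  using sup_diff[of 1] by simp

text \<open>The terms \<open>s\<^sup>2 (Q1 s)\<^sup>2 (Q2 s)\<^sup>2\<close> cancel in \<open>(Q1 s \<cdot> radQ Q2 s)\<^sup>2 - (Q2 s \<cdot> radQ Q1 s)\<^sup>2\<close>,
  so this cross difference is small although \<open>radQ\<close> grows linearly in \<open>s\<close>.\<close>

lemma abs_cross_radQ_diff_le:
  assumes s: "0 < s"
  shows "\<bar>Q1 s * radQ Q2 s - Q2 s * radQ Q1 s\<bar> \<le> 4 * L * decay \<delta> s"
proof -
  have "\<bar>Q1 s * radQ Q2 s - Q2 s * radQ Q1 s\<bar> \<le> 4 * \<bar>Q1 s - Q2 s\<bar> * decay \<delta> s"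
  proof (rule abs_cross_diff_le)
    show "0 < Q1 s" "0 < Q2 s"
      using classQ_bounds[OF Q1.classQ s] classQ_bounds[OF Q2.classQ s] by auto
    show "0 < decay \<delta> s" using decay_pos Q1.delta_pos s by simp
    show "1 / decay \<delta> s \<le> radQ Q1 s" "1 / decay \<delta> s \<le> radQ Q2 s"
      using Q1.radQ_lower[OF s] Q2.radQ_lower[OF s] Q1.delta_pos by (simp_all add: decay_def)
    show "(Q1 s * radQ Q2 s)\<^sup>2 - (Q2 s * radQ Q1 s)\<^sup>2 = 4 * ((Q1 s)\<^sup>2 - (Q2 s)\<^sup>2)"
      unfolding power_mult_distrib radQ_sq(1)[OF Q1.classQ s] radQ_sq(1)[OF Q2.classQ s]
      by (simp add: algebra_simps)
  qed
  also have "\<dots> \<le> 4 * L * decay \<delta> s"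
    using sup_diff[OF s] decay_pos[OF Q1.delta_pos, of s] s by (intro mult_right_mono) auto
  finally show ?thesis .
qed

lemma abs_Q_div_radQ_diff_le:
  assumes s: "0 < s"
  shows "\<bar>Q1 s / radQ Q1 s - Q2 s / radQ Q2 s\<bar> \<le> 4 * L * (decay \<delta> s) ^ 3"
proof -
  define R1 R2 E where "R1 = radQ Q1 s" and "R2 = radQ Q2 s" and "E = decay \<delta> s"
  have R: "0 < R1" "0 < R2" using radQ_sq(2) Q1.classQ Q2.classQ s by (auto simp: R1_def R2_def)
  have "Q1 s / R1 - Q2 s / R2 = (Q1 s * R2 - Q2 s * R1) * (1 / R1) * (1 / R2)"
    using R by (simp add: field_simps)
  also have "\<bar>\<dots>\<bar> \<le> (4 * L * E) * E * E"
    unfolding abs_mult using abs_cross_radQ_diff_le[OF s] Q1.inv_radQ_le[OF s] Q2.inv_radQ_le[OF s] R L_nonneg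
    by (intro mult_mono) (auto simp: R1_def R2_def E_def)
  finally show ?thesis by (simp add: R1_def R2_def E_def power3_eq_cube algebra_simps)
qed

lemma abs_rateQ_diff_le:
  assumes s: "0 < s"
  shows "\<bar>rateQ Q1 s - rateQ Q2 s\<bar> \<le> 16 * L * (decay \<delta> s) ^ 3"
proof -
  define B1 B2 E where "B1 = denQ Q1 s" and "B2 = denQ Q2 s" and "E = decay \<delta> s"
  have B: "0 < B1" "0 < B2" using denQ_pos Q1.classQ Q2.classQ s by (auto simp: B1_def B2_def)
  have "rateQ Q1 s - rateQ Q2 s = 4 * (Q1 s * radQ Q2 s - Q2 s * radQ Q1 s) * (1 / B1) * (1 / B2)"
    using B unfolding rateQ_eq[OF s] B1_def B2_def by (simp add: denQ_def field_simps)
  also have "\<bar>\<dots>\<bar> \<le> 4 * (4 * L * E) * E * E"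
    unfolding abs_mult using abs_cross_radQ_diff_le[OF s] Q1.inv_denQ_le[OF s] Q2.inv_denQ_le[OF s] B L_nonneg
    by (intro mult_mono) (auto simp: B1_def B2_def E_def)
  finally show ?thesis by (simp add: E_def power3_eq_cube algebra_simps)
qed

lemma abs_shapeQ_diff_le:
  assumes s: "0 < s"
  shows "\<bar>shapeQ Q1 s - shapeQ Q2 s\<bar> \<le> 32 / \<delta> * L * (decay \<delta> s)\<^sup>2"
proof -
  have "shapeQ Q1 s - shapeQ Q2 s = - s * (rateQ Q1 s - rateQ Q2 s)"
    by (simp add: shapeQ_def rateQ_eq[OF s] algebra_simps)
  then have "\<bar>shapeQ Q1 s - shapeQ Q2 s\<bar> = s * \<bar>rateQ Q1 s - rateQ Q2 s\<bar>"
    using s by (simp add: abs_mult)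
  also have "\<dots> \<le> s * (16 * L * (decay \<delta> s) ^ 3)"
    using abs_rateQ_diff_le[OF s] s by (intro mult_left_mono) auto
  also have "\<dots> = (s * decay \<delta> s) * (16 * L * (decay \<delta> s)\<^sup>2)"
    by (simp add: power3_eq_cube power2_eq_square algebra_simps)
  also have "\<dots> \<le> (2 / \<delta>) * (16 * L * (decay \<delta> s)\<^sup>2)"
    using mult_decay_le[OF Q1.delta_pos, of s] s L_nonneg by (intro mult_right_mono) auto
  finally show ?thesis by simp
qed

lemma abs_radQ_diff_le:
  assumes s: "0 < s"
  shows "\<bar>radQ Q1 s - radQ Q2 s\<bar> \<le> 16 * L / (\<delta>\<^sup>2 * decay \<delta> s)"
proof -
  define q1 q2 R1 R2 E where "q1 = Q1 s" and "q2 = Q2 s" and "R1 = radQ Q1 s" and "R2 = radQ Q2 s"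
    and "E = decay \<delta> s"
  have q: "0 < q1" "0 < q2" "q1 \<le> 1" "q2 \<le> 1"
    using classQ_bounds[OF Q1.classQ s] classQ_bounds[OF Q2.classQ s] by (auto simp: q1_def q2_def)
  have E: "0 < E" using decay_pos[OF Q1.delta_pos, of s] s by (simp add: E_def)
  have RE: "1 / E \<le> R1" "1 / E \<le> R2"
    using Q1.radQ_lower[OF s] Q2.radQ_lower[OF s] Q1.delta_pos by (simp_all add: E_def R1_def R2_def decay_def)
  have "0 < R1 + R2" using RE E by (smt (verit) divide_pos_pos)
  then have "\<bar>R1 - R2\<bar> * (R1 + R2) = \<bar>(R1 - R2) * (R1 + R2)\<bar>" by (simp add: abs_mult)
  also have "(R1 - R2) * (R1 + R2) = (s\<^sup>2 - 4) * ((q1 - q2) * (q1 + q2))"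
    using radQ_sq(1)[OF Q1.classQ s] radQ_sq(1)[OF Q2.classQ s]
    by (simp add: R1_def R2_def q1_def q2_def power2_eq_square algebra_simps)
  also have "\<bar>\<dots>\<bar> = \<bar>s\<^sup>2 - 4\<bar> * (\<bar>q1 - q2\<bar> * (q1 + q2))"
    using q by (simp add: abs_mult)
  also have "\<dots> \<le> (s\<^sup>2 + 4) * (L * 2)"
    using sup_diff[OF s] q L_nonneg by (intro mult_mono) (auto simp: q1_def q2_def abs_le_iff)
  finally have "\<bar>R1 - R2\<bar> * (2 / E) \<le> (s\<^sup>2 + 4) * (L * 2)"
    using RE mult_left_mono[of "2 / E" "R1 + R2" "\<bar>R1 - R2\<bar>"] by (simp add: field_simps)
  then have "\<bar>R1 - R2\<bar> \<le> (s\<^sup>2 + 4) * L * E" using E by (simp add: field_simps)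
  also have "\<dots> \<le> (4 * (1 + s)\<^sup>2) * L * E"
    using s L_nonneg E by (intro mult_right_mono) (auto simp: power2_eq_square algebra_simps)
  also have "4 * (1 + s)\<^sup>2 = 16 / (\<delta>\<^sup>2 * E\<^sup>2)"
  proof -
    have "(1 + s) * E = 2 / \<delta>" using one_plus_mult_decay[OF Q1.delta_pos, of s] s by (simp add: E_def)
    then have "1 + s = 2 / (\<delta> * E)" using E Q1.delta_pos by (simp add: field_simps)
    then show ?thesis by (simp add: power_divide power_mult_distrib)
  qed
  finally show ?thesis using E by (simp add: R1_def R2_def E_def power2_eq_square field_simps)
qed

lemma abs_inv_radQ_diff_le:
  assumes s: "0 < s"
  shows "\<bar>1 / radQ Q1 s - 1 / radQ Q2 s\<bar> \<le> 16 / \<delta>\<^sup>2 * L * decay \<delta> s"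
proof -
  define R1 R2 E where "R1 = radQ Q1 s" and "R2 = radQ Q2 s" and "E = decay \<delta> s"
  have R: "0 < R1" "0 < R2" using radQ_sq(2) Q1.classQ Q2.classQ s by (auto simp: R1_def R2_def)
  have E: "0 < E" using decay_pos[OF Q1.delta_pos, of s] s by (simp add: E_def)
  have "1 / R1 - 1 / R2 = (R2 - R1) * (1 / R1) * (1 / R2)" using R by (simp add: field_simps)
  also have "\<bar>\<dots>\<bar> \<le> 16 * L / (\<delta>\<^sup>2 * E) * E * E"
    unfolding abs_mult using abs_radQ_diff_le[OF s] Q1.inv_radQ_le[OF s] Q2.inv_radQ_le[OF s] R L_nonneg
    by (intro mult_mono) (auto simp: R1_def R2_def E_def abs_minus_commute)
  finally show ?thesis using E by (simp add: R1_def R2_def E_def power2_eq_square)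
qed

lemma abs_inv_denQ_diff_le:
  assumes s: "0 < s"
  shows "\<bar>1 / denQ Q1 s - 1 / denQ Q2 s\<bar> \<le> (2 / \<delta> + 16 / \<delta>\<^sup>2) * L * decay \<delta> s"
proof -
  define B1 B2 E where "B1 = denQ Q1 s" and "B2 = denQ Q2 s" and "E = decay \<delta> s"
  have B: "0 < B1" "0 < B2" using denQ_pos Q1.classQ Q2.classQ s by (auto simp: B1_def B2_def)
  have E: "0 < E" using decay_pos[OF Q1.delta_pos, of s] s by (simp add: E_def)
  have "s * E \<le> 2 / \<delta>" using mult_decay_le[OF Q1.delta_pos, of s] s by (simp add: E_def)
  then have "s \<le> 2 / \<delta> / E" using E by (simp only: pos_le_divide_eq)
  then have "s * L \<le> 2 / \<delta> / E * L" using L_nonneg by (rule mult_right_mono)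
  moreover have "B1 - B2 = s * (Q1 s - Q2 s) + (radQ Q1 s - radQ Q2 s)"
    by (simp add: B1_def B2_def denQ_def algebra_simps)
  then have "\<bar>B1 - B2\<bar> \<le> s * \<bar>Q1 s - Q2 s\<bar> + \<bar>radQ Q1 s - radQ Q2 s\<bar>"
    using s by (metis abs_mult abs_of_pos abs_triangle_ineq)
  moreover have "s * \<bar>Q1 s - Q2 s\<bar> \<le> s * L" using sup_diff[OF s] s by simp
  ultimately have "\<bar>B1 - B2\<bar> \<le> 2 / \<delta> / E * L + 16 * L / (\<delta>\<^sup>2 * E)"
    using abs_radQ_diff_le[OF s] by (simp add: E_def)
  also have "\<dots> = (2 / \<delta> + 16 / \<delta>\<^sup>2) * L / E" using E Q1.delta_pos by (simp add: field_simps)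
  finally have dB: "\<bar>B1 - B2\<bar> \<le> (2 / \<delta> + 16 / \<delta>\<^sup>2) * L / E" .
  have "1 / B1 - 1 / B2 = (B2 - B1) * (1 / B1) * (1 / B2)" using B by (simp add: field_simps)
  also have "\<bar>\<dots>\<bar> \<le> (2 / \<delta> + 16 / \<delta>\<^sup>2) * L / E * E * E"
    unfolding abs_mult using dB Q1.inv_denQ_le[OF s] Q2.inv_denQ_le[OF s] B L_nonneg Q1.delta_pos
    by (intro mult_mono) (auto simp: B1_def B2_def E_def abs_minus_commute)
  finally show ?thesis using E by (simp add: B1_def B2_def E_def)
qed

lemma abs_Omega_exponent_diff_le:
  assumes r: "0 \<le> r"
  shows "\<bar>Omega_exponent Q1 r - Omega_exponent Q2 r\<bar> \<le> 128 / \<delta> ^ 3 * L"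
proof -
  define c where "c = 128 / \<delta> ^ 3 * L"
  have c: "0 \<le> c" using Q1.delta_pos L_nonneg by (simp add: c_def)
  have integrable: "rateQ Q1 integrable_on {0..r}" "rateQ Q2 integrable_on {0..r}"
    using rateQ_integrable[OF Q1.classQ order_refl] rateQ_integrable[OF Q2.classQ order_refl] by auto
  have bound: "((\<lambda>s. c * (1 / (1 + s)\<^sup>2)) has_integral (c * (1 - 1 / (1 + r)))) {0..r}"
    by (rule has_integral_mult_right[OF has_integral_inverse_one_plus_power2[OF r]])
  have pointwise: "\<bar>rateQ Q1 s - rateQ Q2 s\<bar> \<le> c * (1 / (1 + s)\<^sup>2)" if "s \<in> {0..r}" for s
  proof (cases "s = 0")
    case False
    then have s: "0 < s" using that by auto
    have "\<bar>rateQ Q1 s - rateQ Q2 s\<bar> \<le> 16 * L * (decay \<delta> s) ^ 3" by (rule abs_rateQ_diff_le[OF s])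
    also have "\<dots> = c * (1 / (1 + s) ^ 3)"
      by (simp add: c_def decay_def power_divide power_mult_distrib)
    also have "\<dots> \<le> c * (1 / (1 + s)\<^sup>2)"
      using s c by (intro mult_left_mono divide_left_mono power_increasing) auto
    finally show ?thesis .
  qed (simp add: rateQ_zero c)
  have "\<bar>Omega_exponent Q1 r - Omega_exponent Q2 r\<bar> = \<bar>integral {0..r} (\<lambda>s. rateQ Q1 s - rateQ Q2 s)\<bar>"
    unfolding Omega_exponent_def integral_diff[OF integrable] ..
  also have "\<dots> \<le> c * (1 - 1 / (1 + r))"
    using integral_norm_bound_integral[OF integrable_diff[OF integrable] has_integral_integrable[OF bound]]
      pointwise integral_unique[OF bound] by simp
  also have "\<dots> \<le> c" using c r by (simp add: mult_left_le)
  finally show ?thesis by (simp add: c_def)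
qed

lemma abs_exp_neg_Omega_exponent_diff_le:
  assumes r: "0 < r"
  shows "\<bar>exp (- Omega_exponent Q1 r) - exp (- Omega_exponent Q2 r)\<bar> \<le> 128 / \<delta> ^ 3 * L * (decay \<delta> r)\<^sup>2"
proof -
  have "\<bar>exp (- Omega_exponent Q1 r) - exp (- Omega_exponent Q2 r)\<bar>
      \<le> max (exp (- Omega_exponent Q1 r)) (exp (- Omega_exponent Q2 r))
        * \<bar>Omega_exponent Q1 r - Omega_exponent Q2 r\<bar>"
    by (rule abs_exp_neg_diff_le)
  also have "\<dots> \<le> (decay \<delta> r)\<^sup>2 * (128 / \<delta> ^ 3 * L)"
    using Q1.exp_neg_Omega_exponent_le[OF r] Q2.exp_neg_Omega_exponent_le[OF r]
      abs_Omega_exponent_diff_le r by (intro mult_mono) auto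
  finally show ?thesis by (simp add: algebra_simps)
qed

lemma abs_shapeQ_mult_diff_le:
  assumes s: "0 < s"
  shows "\<bar>shapeQ Q1 s * (Q1 s / radQ Q1 s) - shapeQ Q2 s * (Q2 s / radQ Q2 s)\<bar>
    \<le> (32 / \<delta> + 128 / \<delta>\<^sup>2) * L * (decay \<delta> s) ^ 3"
proof -
  define E where "E = decay \<delta> s"
  have E: "0 < E" using decay_pos[OF Q1.delta_pos] s by (simp add: E_def)
  have "\<bar>shapeQ Q1 s * (Q1 s / radQ Q1 s) - shapeQ Q2 s * (Q2 s / radQ Q2 s)\<bar>
      \<le> \<bar>shapeQ Q1 s - shapeQ Q2 s\<bar> * \<bar>Q1 s / radQ Q1 s\<bar>
        + \<bar>shapeQ Q2 s\<bar> * \<bar>Q1 s / radQ Q1 s - Q2 s / radQ Q2 s\<bar>"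
    by (rule abs_mult_diff_le)
  also have "\<dots> \<le> (32 / \<delta> * L * E\<^sup>2) * E + (8 * E\<^sup>2) * (4 * L * E ^ 3)"
    using abs_shapeQ_diff_le[OF s] Q1.Q_div_radQ_le[OF s] Q2.abs_shapeQ_le[OF s]
      abs_Q_div_radQ_diff_le[OF s] classQ_bounds[OF Q1.classQ s] radQ_sq(2)[OF Q1.classQ s]
      L_nonneg Q1.delta_pos
    by (intro add_mono mult_mono) (auto simp: E_def)
  also have "\<dots> = 32 / \<delta> * L * E ^ 3 + 32 * L * E\<^sup>2 * E ^ 3"
    by (simp add: power2_eq_square power3_eq_cube algebra_simps)
  also have "\<dots> \<le> 32 / \<delta> * L * E ^ 3 + 32 * L * (4 / \<delta>\<^sup>2) * E ^ 3"
    using Q1.decay_sq_le[of s] s L_nonneg E by (intro add_left_mono mult_right_mono mult_left_mono) (auto simp: E_def)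
  finally show ?thesis by (simp add: E_def algebra_simps)
qed

lemma abs_rateQ_mult_shapeQ_diff_le:
  assumes s: "0 < s"
  shows "\<bar>rateQ Q1 s * shapeQ Q1 s - rateQ Q2 s * shapeQ Q2 s\<bar>
    \<le> (128 / \<delta> + 512 / \<delta>\<^sup>2) * L * (decay \<delta> s) ^ 3"
proof -
  define E where "E = decay \<delta> s"
  have E: "0 < E" using decay_pos[OF Q1.delta_pos] s by (simp add: E_def)
  have "\<bar>rateQ Q1 s * shapeQ Q1 s - rateQ Q2 s * shapeQ Q2 s\<bar>
      \<le> \<bar>rateQ Q1 s - rateQ Q2 s\<bar> * \<bar>shapeQ Q1 s\<bar> + \<bar>rateQ Q2 s\<bar> * \<bar>shapeQ Q1 s - shapeQ Q2 s\<bar>"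
    by (rule abs_mult_diff_le)
  also have "\<dots> \<le> (16 * L * E ^ 3) * (8 * E\<^sup>2) + (4 * E) * (32 / \<delta> * L * E\<^sup>2)"
    using abs_rateQ_diff_le[OF s] Q1.abs_shapeQ_le[OF s] Q2.abs_rateQ_le[OF s]
      abs_shapeQ_diff_le[OF s] L_nonneg
    by (intro add_mono mult_mono) (auto simp: E_def)
  also have "\<dots> = 128 * L * E\<^sup>2 * E ^ 3 + 128 / \<delta> * L * E ^ 3"
    by (simp add: power2_eq_square power3_eq_cube algebra_simps)
  also have "\<dots> \<le> 128 * L * (4 / \<delta>\<^sup>2) * E ^ 3 + 128 / \<delta> * L * E ^ 3"
    using Q1.decay_sq_le[of s] s L_nonneg E by (intro add_right_mono mult_right_mono mult_left_mono) (auto simp: E_def)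
  finally show ?thesis by (simp add: E_def algebra_simps)
qed

lemma abs_radQ_denQ_weight_diff_le:
  assumes s: "0 < s"
  shows "\<bar>1 / radQ Q1 s * (1 / denQ Q1 s)\<^sup>2 - 1 / radQ Q2 s * (1 / denQ Q2 s)\<^sup>2\<bar>
    \<le> (48 / \<delta>\<^sup>2 + 4 / \<delta>) * L * (decay \<delta> s) ^ 3"
proof -
  define E v1 v2 where "E = decay \<delta> s" and "v1 = 1 / denQ Q1 s" and "v2 = 1 / denQ Q2 s"
  have v: "0 < v1" "v1 \<le> E" "0 < v2" "v2 \<le> E"
    using denQ_pos[OF Q1.classQ s] denQ_pos[OF Q2.classQ s] Q1.inv_denQ_le[OF s] Q2.inv_denQ_le[OF s]
    by (auto simp: v1_def v2_def E_def)
  have "v1\<^sup>2 - v2\<^sup>2 = (v1 - v2) * (v1 + v2)" by (simp add: power2_eq_square algebra_simps)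
  then have "\<bar>v1\<^sup>2 - v2\<^sup>2\<bar> = \<bar>v1 - v2\<bar> * (v1 + v2)" using v by (simp add: abs_mult)
  also have "\<dots> \<le> ((2 / \<delta> + 16 / \<delta>\<^sup>2) * L * E) * (2 * E)"
    using abs_inv_denQ_diff_le[OF s] v by (intro mult_mono) (auto simp: v1_def v2_def E_def)
  finally have dv: "\<bar>v1\<^sup>2 - v2\<^sup>2\<bar> \<le> ((2 / \<delta> + 16 / \<delta>\<^sup>2) * L * E) * (2 * E)" .
  have "\<bar>1 / radQ Q1 s * v1\<^sup>2 - 1 / radQ Q2 s * v2\<^sup>2\<bar>
      \<le> \<bar>1 / radQ Q1 s - 1 / radQ Q2 s\<bar> * \<bar>v1\<^sup>2\<bar> + \<bar>1 / radQ Q2 s\<bar> * \<bar>v1\<^sup>2 - v2\<^sup>2\<bar>"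
    by (rule abs_mult_diff_le)
  also have "\<dots> \<le> (16 / \<delta>\<^sup>2 * L * E) * E\<^sup>2 + E * (((2 / \<delta> + 16 / \<delta>\<^sup>2) * L * E) * (2 * E))"
    using abs_inv_radQ_diff_le[OF s] Q2.inv_radQ_le[OF s] radQ_sq(2)[OF Q2.classQ s] v dv
    by (intro add_mono mult_mono) (auto simp: E_def power_mono)
  also have "\<dots> = (48 / \<delta>\<^sup>2 + 4 / \<delta>) * L * E ^ 3"
    by (simp add: power2_eq_square power3_eq_cube field_simps)
  finally show ?thesis by (simp add: v1_def v2_def E_def)
qed

lemma abs_deriv_mult_weight_diff_le:
  assumes s: "0 < s"
    and N: "s * \<bar>deriv Q1 s - deriv Q2 s\<bar> \<le> N" and N2: "s * \<bar>deriv Q2 s\<bar> \<le> N2"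
  shows "\<bar>s * deriv Q1 s * (1 / radQ Q1 s * (1 / denQ Q1 s)\<^sup>2)
          - s * deriv Q2 s * (1 / radQ Q2 s * (1 / denQ Q2 s)\<^sup>2)\<bar>
    \<le> (N + (48 / \<delta>\<^sup>2 + 4 / \<delta>) * L * N2) * (decay \<delta> s) ^ 3"
proof -
  have "\<bar>s * deriv Q1 s * (1 / radQ Q1 s * (1 / denQ Q1 s)\<^sup>2)
          - s * deriv Q2 s * (1 / radQ Q2 s * (1 / denQ Q2 s)\<^sup>2)\<bar>
      \<le> \<bar>s * deriv Q1 s - s * deriv Q2 s\<bar> * \<bar>1 / radQ Q1 s * (1 / denQ Q1 s)\<^sup>2\<bar>
        + \<bar>s * deriv Q2 s\<bar> * \<bar>1 / radQ Q1 s * (1 / denQ Q1 s)\<^sup>2 - 1 / radQ Q2 s * (1 / denQ Q2 s)\<^sup>2\<bar>"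
    by (rule abs_mult_diff_le)
  also have "\<dots> \<le> N * (decay \<delta> s) ^ 3 + N2 * ((48 / \<delta>\<^sup>2 + 4 / \<delta>) * L * (decay \<delta> s) ^ 3)"
    using N N2 Q1.radQ_denQ_weight_le[OF s] abs_radQ_denQ_weight_diff_le[OF s] s
      order_trans[OF _ N] order_trans[OF _ N2]
    by (intro add_mono mult_mono) (auto simp: abs_mult right_diff_distrib[symmetric])
  finally show ?thesis by (simp add: algebra_simps)
qed

lemma abs_dshapeQ_diff_le:
  assumes s: "0 < s"
    and N: "s * \<bar>deriv Q1 s - deriv Q2 s\<bar> \<le> N" and N2: "s * \<bar>deriv Q2 s\<bar> \<le> N2"
  shows "\<bar>dshapeQ Q1 s - dshapeQ Q2 s\<bar>
    \<le> ((64 / \<delta> + 256 / \<delta>\<^sup>2) * L + 16 * N + 16 * (48 / \<delta>\<^sup>2 + 4 / \<delta>) * L * N2) * (decay \<delta> s) ^ 3"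
proof -
  have triangle: "\<bar>(- 2 * a1 - 16 * b1) - (- 2 * a2 - 16 * b2)\<bar> \<le> 2 * \<bar>a1 - a2\<bar> + 16 * \<bar>b1 - b2\<bar>"
    for a1 a2 b1 b2 :: real
    by (simp add: abs_if)
  have "\<bar>dshapeQ Q1 s - dshapeQ Q2 s\<bar>
      \<le> 2 * \<bar>shapeQ Q1 s * (Q1 s / radQ Q1 s) - shapeQ Q2 s * (Q2 s / radQ Q2 s)\<bar>
        + 16 * \<bar>s * deriv Q1 s * (1 / radQ Q1 s * (1 / denQ Q1 s)\<^sup>2)
                - s * deriv Q2 s * (1 / radQ Q2 s * (1 / denQ Q2 s)\<^sup>2)\<bar>"
    unfolding dshapeQ_def by (rule triangle)
  also have "\<dots> \<le> 2 * ((32 / \<delta> + 128 / \<delta>\<^sup>2) * L * (decay \<delta> s) ^ 3)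
      + 16 * ((N + (48 / \<delta>\<^sup>2 + 4 / \<delta>) * L * N2) * (decay \<delta> s) ^ 3)"
    using abs_shapeQ_mult_diff_le[OF s] abs_deriv_mult_weight_diff_le[OF s N N2]
    by (intro add_mono mult_left_mono) auto
  finally show ?thesis by (simp add: algebra_simps)
qed

lemma abs_dW_factor_diff_le:
  assumes s: "0 < s"
    and N: "s * \<bar>deriv Q1 s - deriv Q2 s\<bar> \<le> N" and N2: "s * \<bar>deriv Q2 s\<bar> \<le> N2"
  shows "\<bar>dW_factor Q1 s - dW_factor Q2 s\<bar>
    \<le> ((192 / \<delta> + 768 / \<delta>\<^sup>2) * L + 16 * N + 16 * (48 / \<delta>\<^sup>2 + 4 / \<delta>) * L * N2) * (decay \<delta> s) ^ 3"
proof -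
  have "\<bar>dW_factor Q1 s - dW_factor Q2 s\<bar>
      \<le> \<bar>dshapeQ Q1 s - dshapeQ Q2 s\<bar> + \<bar>rateQ Q1 s * shapeQ Q1 s - rateQ Q2 s * shapeQ Q2 s\<bar>"
    unfolding dW_factor_def by linarith
  also have "\<dots> \<le> ((64 / \<delta> + 256 / \<delta>\<^sup>2) * L + 16 * N + 16 * (48 / \<delta>\<^sup>2 + 4 / \<delta>) * L * N2) * (decay \<delta> s) ^ 3
      + (128 / \<delta> + 512 / \<delta>\<^sup>2) * L * (decay \<delta> s) ^ 3"
    by (rule add_mono[OF abs_dshapeQ_diff_le[OF s N N2] abs_rateQ_mult_shapeQ_diff_le[OF s]])
  finally show ?thesis by (simp add: algebra_simps)
qed

lemma abs_WQ_diff_le: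
  assumes r: "0 < r"
  shows "\<bar>WQ Q1 r - WQ Q2 r\<bar> \<le> W_coeff \<delta> * L * (decay \<delta> r) ^ 4"
proof -
  define E where "E = decay \<delta> r"
  have "\<bar>WQ Q1 r - WQ Q2 r\<bar>
      \<le> \<bar>exp (- Omega_exponent Q1 r) - exp (- Omega_exponent Q2 r)\<bar> * \<bar>shapeQ Q1 r\<bar>
        + \<bar>exp (- Omega_exponent Q2 r)\<bar> * \<bar>shapeQ Q1 r - shapeQ Q2 r\<bar>"
    unfolding WQ_eq[OF Q1.classQ r] WQ_eq[OF Q2.classQ r] by (rule abs_mult_diff_le)
  also have "\<dots> \<le> (128 / \<delta> ^ 3 * L * E\<^sup>2) * (8 * E\<^sup>2) + E\<^sup>2 * (32 / \<delta> * L * E\<^sup>2)"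
    using abs_exp_neg_Omega_exponent_diff_le[OF r] Q1.abs_shapeQ_le[OF r]
      Q2.exp_neg_Omega_exponent_le[OF r] abs_shapeQ_diff_le[OF r]
    by (intro add_mono mult_mono) (auto simp: E_def)
  also have "\<dots> = W_coeff \<delta> * L * E ^ 4"
    by (simp add: W_coeff_def power2_eq_square power4_eq_xxxx algebra_simps)
  finally show ?thesis by (simp add: E_def)
qed

lemma weighted_abs_WQ_diff_le:
  assumes r: "0 < r"
  shows "(1 + r ^ 4) * \<bar>WQ Q1 r - WQ Q2 r\<bar> \<le> (2 / \<delta>) ^ 4 * W_coeff \<delta> * L"
proof -
  have "(1 + r ^ 4) * \<bar>WQ Q1 r - WQ Q2 r\<bar> \<le> (1 + r ^ 4) * (W_coeff \<delta> * L * (decay \<delta> r) ^ 4)"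
    using abs_WQ_diff_le[OF r] by (intro mult_left_mono) (auto simp: add_pos_nonneg)
  also have "\<dots> \<le> (2 / \<delta>) ^ 4 * (W_coeff \<delta> * L)"
    using Q1.delta_pos r L_nonneg by (intro one_plus_power_mult_decay_le) (auto simp: W_coeff_def)
  finally show ?thesis by (simp add: algebra_simps)
qed

lemma abs_deriv_WQ_diff_le:
  assumes r: "0 < r" and L: "L \<le> 1"
    and N: "r * \<bar>deriv Q1 r - deriv Q2 r\<bar> \<le> N" and N2: "r * \<bar>deriv Q2 r\<bar> \<le> N2"
  shows "\<bar>deriv (WQ Q1) r - deriv (WQ Q2) r\<bar> \<le> dW_coeff \<delta> * (N + (1 + N2) * L) * (decay \<delta> r) ^ 5"
proof -
  define E M cP cw where "E = decay \<delta> r" and "M = 128 / \<delta> ^ 3"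
    and "cP = 192 / \<delta> + 768 / \<delta>\<^sup>2" and "cw = 48 / \<delta>\<^sup>2 + 4 / \<delta>"
  have E: "0 < E" using decay_pos[OF Q1.delta_pos] r by (simp add: E_def)
  have coeffs: "0 \<le> M" "0 \<le> cP" "0 \<le> cw" using Q1.delta_pos by (simp_all add: M_def cP_def cw_def)
  have N_nonneg: "0 \<le> N" "0 \<le> N2" using order_trans[OF _ N] order_trans[OF _ N2] r by simp_all
  have N1: "r * \<bar>deriv Q1 r\<bar> \<le> N + N2"
    using N N2 r abs_triangle_ineq[of "deriv Q1 r - deriv Q2 r" "deriv Q2 r"]
      mult_left_mono[of "\<bar>deriv Q1 r\<bar>" "\<bar>deriv Q1 r - deriv Q2 r\<bar> + \<bar>deriv Q2 r\<bar>" r]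
    by (simp add: distrib_left)
  have "\<bar>deriv (WQ Q1) r - deriv (WQ Q2) r\<bar>
      = \<bar>exp (- Omega_exponent Q1 r) * dW_factor Q1 r - exp (- Omega_exponent Q2 r) * dW_factor Q2 r\<bar>"
    using DERIV_imp_deriv[OF WQ_has_real_derivative[OF Q1.classQ r]]
      DERIV_imp_deriv[OF WQ_has_real_derivative[OF Q2.classQ r]] by simp
  also have "\<dots> \<le> \<bar>exp (- Omega_exponent Q1 r) - exp (- Omega_exponent Q2 r)\<bar> * \<bar>dW_factor Q1 r\<bar>
      + \<bar>exp (- Omega_exponent Q2 r)\<bar> * \<bar>dW_factor Q1 r - dW_factor Q2 r\<bar>"
    by (rule abs_mult_diff_le)
  also have "\<dots> \<le> (M * L * E\<^sup>2) * ((48 + 16 * (N + N2)) * E ^ 3)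
      + E\<^sup>2 * ((cP * L + 16 * N + 16 * cw * L * N2) * E ^ 3)"
    using abs_exp_neg_Omega_exponent_diff_le[OF r] Q1.abs_dW_factor_le[OF r N1]
      Q2.exp_neg_Omega_exponent_le[OF r] abs_dW_factor_diff_le[OF r N N2] L_nonneg coeffs N_nonneg
    by (intro add_mono mult_mono) (auto simp: E_def M_def cP_def cw_def)
  also have "\<dots> = ((48 * M + cP) * L + 16 * M * (L * N) + 16 * N + (16 * M + 16 * cw) * (L * N2)) * E ^ 5"
    by (simp add: power2_eq_square power3_eq_cube eval_nat_numeral algebra_simps)
  also have "\<dots> \<le> ((48 * M + cP) * L + (16 * M + 16) * N + (16 * M + 16 * cw) * (L * N2)) * E ^ 5"
    \<comment> \<open>here \<open>L \<le> 1\<close> absorbs the product \<open>L \<cdot> N\<close>\<close>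
    using mult_left_mono[OF mult_right_mono[OF L \<open>0 \<le> N\<close>], of "16 * M"] coeffs E
    by (intro mult_right_mono) (auto simp: algebra_simps)
  also have "\<dots> \<le> ((48 * M + cP) + (16 * M + 16) + (16 * M + 16 * cw)) * (L + N + L * N2) * E ^ 5"
    using coeffs L_nonneg N_nonneg E by (intro mult_right_mono weighted_sum_le_sum_mult) auto
  finally show ?thesis by (simp add: E_def dW_coeff_def M_def cP_def cw_def algebra_simps)
qed

lemma weighted_abs_deriv_WQ_diff_le:
  assumes r: "0 < r" and L: "L \<le> 1"
    and N: "r * \<bar>deriv Q1 r - deriv Q2 r\<bar> \<le> N" and N2: "r * \<bar>deriv Q2 r\<bar> \<le> N2"
  shows "(1 + r ^ 5) * \<bar>deriv (WQ Q1) r - deriv (WQ Q2) r\<bar> \<le> (2 / \<delta>) ^ 5 * dW_coeff \<delta> * (N + (1 + N2) * L)"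
proof -
  have "0 \<le> N" "0 \<le> N2" using order_trans[OF _ N] order_trans[OF _ N2] r by simp_all
  have "(1 + r ^ 5) * \<bar>deriv (WQ Q1) r - deriv (WQ Q2) r\<bar>
      \<le> (1 + r ^ 5) * (dW_coeff \<delta> * (N + (1 + N2) * L) * (decay \<delta> r) ^ 5)"
    using abs_deriv_WQ_diff_le[OF r L N N2] r by (intro mult_left_mono) (auto simp: add_nonneg_nonneg)
  also have "\<dots> \<le> (2 / \<delta>) ^ 5 * (dW_coeff \<delta> * (N + (1 + N2) * L))"
    using Q1.delta_pos r L_nonneg \<open>0 \<le> N\<close> \<open>0 \<le> N2\<close>
    by (intro one_plus_power_mult_decay_le) (auto simp: dW_coeff_def)
  finally show ?thesis by (simp add: algebra_simps)
qed

end

lemma admissible_pair_Linf: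
  assumes "admissible \<delta> Q1" "admissible \<delta> Q2"
  shows "admissible_pair \<delta> Q1 Q2 (Linf (\<lambda>s. Q1 s - Q2 s))"
  using assms Linf_classQ_diff(1)[OF admissible.classQ admissible.classQ]
  by (auto simp: admissible_pair_def admissible_pair_axioms_def)

definition stability_const :: "real \<Rightarrow> real" where
  "stability_const \<delta> = max ((2 / \<delta>) ^ 4 * W_coeff \<delta>) ((2 / \<delta>) ^ 5 * dW_coeff \<delta>)"

lemma stability_const_pos: "0 < \<delta> \<Longrightarrow> 0 < stability_const \<delta>"
  unfolding stability_const_def W_coeff_def less_max_iff_disj
  by (intro disjI1 mult_pos_pos add_pos_pos) auto

lemma WQ_stability:
  assumes "admissible \<delta> Q1" "admissible \<delta> Q2" and r: "0 < r"
  defines "C \<equiv> stability_const \<delta>" and "L \<equiv> Linf (\<lambda>s. Q1 s - Q2 s)" and "N \<equiv> NN (\<lambda>s. Q1 s - Q2 s)"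
  shows "(1 + r ^ 4) * \<bar>WQ Q1 r - WQ Q2 r\<bar> \<le> C * L"
    and "(1 + r ^ 5) * \<bar>deriv (WQ Q1) r - deriv (WQ Q2) r\<bar> \<le> C * N + C * (1 + NN Q2) * L"
proof -
  interpret admissible_pair \<delta> Q1 Q2 L
    unfolding L_def using assms(1,2) by (rule admissible_pair_Linf)
  have N: "r * \<bar>deriv Q1 r - deriv Q2 r\<bar> \<le> N"
    unfolding N_def by (rule NN_classQ_diff_upper[OF Q1.classQ Q2.classQ r])
  have N2: "r * \<bar>deriv Q2 r\<bar> \<le> NN Q2" by (rule NN_upper[OF classQ_bdd_above_deriv[OF Q2.classQ] r])
  have nonneg: "0 \<le> N" "0 \<le> NN Q2"
    using order_trans[OF _ N] order_trans[OF _ N2] r by simp_all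
  have "(1 + r ^ 4) * \<bar>WQ Q1 r - WQ Q2 r\<bar> \<le> (2 / \<delta>) ^ 4 * W_coeff \<delta> * L"
    by (rule weighted_abs_WQ_diff_le[OF r])
  also have "\<dots> \<le> C * L" using L_nonneg by (intro mult_right_mono) (simp_all add: C_def stability_const_def)
  finally show "(1 + r ^ 4) * \<bar>WQ Q1 r - WQ Q2 r\<bar> \<le> C * L" .
  have "L \<le> 1" unfolding L_def by (rule Linf_classQ_diff(2)[OF Q1.classQ Q2.classQ])
  then have "(1 + r ^ 5) * \<bar>deriv (WQ Q1) r - deriv (WQ Q2) r\<bar>
      \<le> (2 / \<delta>) ^ 5 * dW_coeff \<delta> * (N + (1 + NN Q2) * L)"
    using weighted_abs_deriv_WQ_diff_le[OF r _ N N2] by blast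
  also have "\<dots> \<le> C * (N + (1 + NN Q2) * L)"
    using L_nonneg nonneg by (intro mult_right_mono) (simp_all add: C_def stability_const_def)
  finally show "(1 + r ^ 5) * \<bar>deriv (WQ Q1) r - deriv (WQ Q2) r\<bar> \<le> C * N + C * (1 + NN Q2) * L"
    by (simp add: algebra_simps)
qed

theorem lemma6p3:
  "\<forall>\<delta>::real. \<delta> > 0 \<longrightarrow> (\<exists>C>0. \<forall>Q1 Q2.
     Q1 \<in> classQ \<and> Q2 \<in> classQ \<and>
     \<delta> \<le> min (Q1 1) (Q2 1) \<and> max (Q1 1) (Q2 1) \<le> sqrt (1 - \<delta>\<^sup>2) \<longrightarrow>
     (\<forall>r>0. (1 + r ^ 4) * \<bar>WQ Q1 r - WQ Q2 r\<bar> \<le> C * Linf (\<lambda>s. Q1 s - Q2 s)) \<and>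
     (\<forall>r>0. (1 + r ^ 5) * \<bar>deriv (WQ Q1) r - deriv (WQ Q2) r\<bar>
        \<le> C * NN (\<lambda>s. Q1 s - Q2 s) + C * (1 + NN Q2) * Linf (\<lambda>s. Q1 s - Q2 s)))"
proof (intro allI impI)
  fix \<delta> :: real assume "\<delta> > 0"
  have "admissible \<delta> Q1 \<and> admissible \<delta> Q2"
    if "Q1 \<in> classQ \<and> Q2 \<in> classQ \<and> \<delta> \<le> min (Q1 1) (Q2 1) \<and> max (Q1 1) (Q2 1) \<le> sqrt (1 - \<delta>\<^sup>2)"
    for Q1 Q2
    using that \<open>\<delta> > 0\<close> by (simp add: admissible_def)
  then show "\<exists>C>0. \<forall>Q1 Q2.
     Q1 \<in> classQ \<and> Q2 \<in> classQ \<and>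
     \<delta> \<le> min (Q1 1) (Q2 1) \<and> max (Q1 1) (Q2 1) \<le> sqrt (1 - \<delta>\<^sup>2) \<longrightarrow>
     (\<forall>r>0. (1 + r ^ 4) * \<bar>WQ Q1 r - WQ Q2 r\<bar> \<le> C * Linf (\<lambda>s. Q1 s - Q2 s)) \<and>
     (\<forall>r>0. (1 + r ^ 5) * \<bar>deriv (WQ Q1) r - deriv (WQ Q2) r\<bar>
        \<le> C * NN (\<lambda>s. Q1 s - Q2 s) + C * (1 + NN Q2) * Linf (\<lambda>s. Q1 s - Q2 s))"
    using stability_const_pos[OF \<open>\<delta> > 0\<close>] WQ_stability by blast
qed

end
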